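(* Let $\mathcal G$ be a finite connected groupoid and $\alpha=(S_g,\alpha_g)_{g\in\mathcal G}$ a unital group-type partial action of $\mathcal G$ on a ring $S=\bigoplus_{y\in\mathcal G_0}S_y$, with $S_g=S1_g$. Let $\mathcal H$ be a subgroupoid of $\mathcal G$ such that the restricted partial action $\alpha_{\mathcal H}$ is group-type, let $\mathcal H=\mathcal H_1\,\dot\cup\cdots\dot\cup\,\mathcal H_r$ be its decomposition into connected components with object sets $Y_1,\dots,Y_r$ (so $\mathcal H_0=Y_1\,\dot\cup\cdots\dot\cup\,Y_r$), let $S_j=\bigoplus_{y\in Y_j}S_y$, $S^c_{\mathcal H}=\bigoplus_{y\in\mathcal G_0\setminus\mathcal H_0}S_y$, and choose $y_j\in Y_j$ for each $j$. Then $$S^{\alpha_{\mathcal H}}=\Big(\bigoplus_{j=1}^r S_j^{\alpha_{\mathcal H_j}}\Big)\oplus S^c_{\mathcal H}\;\simeq\;\Big(\bigoplus_{j=1}^r S_{y_j}^{\alpha_{\mathcal H_j(y_j)}}\Big)\oplus S^c_{\mathcal H}.$$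
   Context: A groupoid is a small category with all morphisms invertible; $\mathcal G_0$ is the set of objects (identified with identity morphisms), $s(g),t(g)$ source and target, $\mathcal G(x,y)=\{g:s(g)=x,t(g)=y\}$, $\mathcal G(x)=\mathcal G(x,x)$; $gh$ is defined iff $s(g)=t(h)$; connected means all $\mathcal G(x,y)\ne\emptyset$; connected components are the full subgroupoids on classes of $x\sim y\iff\mathcal G(x,y)\ne\emptyset$. A partial action $\alpha=(S_g,\alpha_g)_{g\in\mathcal G}$ on a ring $S$: for each $g$, $S_{t(g)}$ is an ideal of $S$, $S_g$ an ideal of $S_{t(g)}$, $\alpha_g:S_{g^{-1}}\to S_g$ a ring isomorphism; $\alpha_x=\mathrm{id}_{S_x}$ for $x\in\mathcal G_0$; for composable $(g,h)$, $\alpha_h^{-1}(S_{g^{-1}}\cap S_h)\subseteq S_{(gh)^{-1}}$ and $\alpha_g\alpha_h(a)=\alpha_{gh}(a)$ there. Unital: $S_g=S1_g$, $1_g$ central idempotent. A transversal for $x$ in a connected groupoid $\mathcal K$ is $\{\tau_y\}_{y\in\mathcal K_0}$, $\tau_y\in\mathcal K(x,y)$, $\tau_x=x$; a partial action of connected $\mathcal K$ on $A=\bigoplus_{y\in\mathcal K_0}A_y$ is group-type if some $x$ and transversal satisfy $A_{\tau_y^{-1}}=A_x$, $A_{\tau_y}=A_y$ for all $y$; a partial action of a non-connected groupoid on such a direct sum is group-type if its restriction to each connected component $\mathcal K_Y$, acting on $\bigoplus_{y\in Y}A_y$, is group-type. For a subgroupoid $\mathcal H$, $\alpha_{\mathcal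 H}=(S_h,\alpha_h)_{h\in\mathcal H}$ is the restricted partial action on $\bigoplus_{z\in\mathcal H_0}S_z$, and $\alpha_{\mathcal H_j}$, $\alpha_{\mathcal H_j(y_j)}$ are the restrictions to $\mathcal H_j$ (on $S_j$) and to $\mathcal H_j(y_j)$ (on $S_{y_j}$). For a subgroupoid $\mathcal K$ and a subring $A\subseteq S$, $A^{\alpha_{\mathcal K}}=\{a\in A:\alpha_k(a1_{k^{-1}})=a1_k\ \forall k\in\mathcal K\}$; in particular $S^{\alpha_{\mathcal H}}$ consists of elements of all of $S$. *)

theory Defs
  imports Main
begin

text \<open>A groupoid given by its set of morphisms, source, target, partial composition
  and inversion.  Objects are identified with identity morphisms.\<close>

record 'g groupoid =
  mor :: "'g set"
  src :: "'g \<Rightarrow> 'g"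
  tgt :: "'g \<Rightarrow> 'g"
  cmp :: "'g \<Rightarrow> 'g \<Rightarrow> 'g"
  gin :: "'g \<Rightarrow> 'g"

definition objs :: "('g, 'b) groupoid_scheme \<Rightarrow> 'g set" where
  "objs G = src G ` mor G"

definition is_groupoid :: "('g, 'b) groupoid_scheme \<Rightarrow> bool" where
  "is_groupoid G \<longleftrightarrow>
     (\<forall>g\<in>mor G. src G g \<in> mor G \<and> tgt G g \<in> mor G)
   \<and> (\<forall>x\<in>objs G. src G x = x \<and> tgt G x = x)
   \<and> (\<forall>g\<in>mor G. tgt G g \<in> objs G)
   \<and> (\<forall>g\<in>mor G. \<forall>h\<in>mor G. src G g = tgt G h \<longrightarrow>
        cmp G g h \<in> mor G \<and> src G (cmp G g h) = src G h \<and> tgt G (cmp G g h) = tgt G g)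
   \<and> (\<forall>f\<in>mor G. \<forall>g\<in>mor G. \<forall>h\<in>mor G. src G f = tgt G g \<longrightarrow> src G g = tgt G h \<longrightarrow>
        cmp G (cmp G f g) h = cmp G f (cmp G g h))
   \<and> (\<forall>g\<in>mor G. cmp G (tgt G g) g = g \<and> cmp G g (src G g) = g)
   \<and> (\<forall>g\<in>mor G. gin G g \<in> mor G \<and> src G (gin G g) = tgt G g \<and> tgt G (gin G g) = src G g
        \<and> cmp G g (gin G g) = tgt G g \<and> cmp G (gin G g) g = src G g)"

definition homs :: "('g, 'b) groupoid_scheme \<Rightarrow> 'g set \<Rightarrow> 'g \<Rightarrow> 'g \<Rightarrow> 'g set" where
  "homs G K x y = {g \<in> K. src G g = x \<and> tgt G g = y}"

definition connected_groupoid :: "('g, 'b) groupoid_scheme \<Rightarrow> bool" where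
  "connected_groupoid G \<longleftrightarrow> (\<forall>x\<in>objs G. \<forall>y\<in>objs G. homs G (mor G) x y \<noteq> {})"

definition subgroupoid :: "'g set \<Rightarrow> ('g, 'b) groupoid_scheme \<Rightarrow> bool" where
  "subgroupoid H G \<longleftrightarrow> H \<subseteq> mor G
     \<and> (\<forall>h\<in>H. src G h \<in> H \<and> tgt G h \<in> H \<and> gin G h \<in> H)
     \<and> (\<forall>g\<in>H. \<forall>h\<in>H. src G g = tgt G h \<longrightarrow> cmp G g h \<in> H)"

definition sobjs :: "('g, 'b) groupoid_scheme \<Rightarrow> 'g set \<Rightarrow> 'g set" where
  "sobjs G H = src G ` H"

definition component_objs :: "('g, 'b) groupoid_scheme \<Rightarrow> 'g set \<Rightarrow> 'g set set" where
  "component_objs G H = (\<lambda>x. {y \<in> sobjs G H. homs G H x y \<noteq> {}}) ` sobjs G H"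

definition component :: "('g, 'b) groupoid_scheme \<Rightarrow> 'g set \<Rightarrow> 'g set \<Rightarrow> 'g set" where
  "component G H Y = {h \<in> H. src G h \<in> Y \<and> tgt G h \<in> Y}"

definition ideal_of :: "('g \<Rightarrow> 'a::ring) \<Rightarrow> 'g \<Rightarrow> 'a set" where
  "ideal_of e g = {a * e g | a. True}"

definition dsum :: "'i set \<Rightarrow> ('i \<Rightarrow> 'a::ring set) \<Rightarrow> 'a set" where
  "dsum I A = {(\<Sum>i\<in>I. f i) | f. \<forall>i\<in>I. f i \<in> A i}"

definition internal_direct_sum :: "'i set \<Rightarrow> ('i \<Rightarrow> 'a::ring set) \<Rightarrow> 'a set \<Rightarrow> bool" where
  "internal_direct_sum I A M \<longleftrightarrow> finite I \<and> M = dsum I A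
     \<and> (\<forall>f. (\<forall>i\<in>I. f i \<in> A i) \<and> (\<Sum>i\<in>I. f i) = 0 \<longrightarrow> (\<forall>i\<in>I. f i = 0))"

definition ring_iso_on :: "('a::ring \<Rightarrow> 'a) \<Rightarrow> 'a set \<Rightarrow> 'a set \<Rightarrow> bool" where
  "ring_iso_on f A B \<longleftrightarrow> bij_betw f A B
     \<and> (\<forall>a\<in>A. \<forall>b\<in>A. f (a + b) = f a + f b \<and> f (a * b) = f a * f b)"

text \<open>Unital partial action \<open>(S_g, \<alpha>_g)\<close> of \<open>G\<close> on the ring \<open>S\<close> (the whole type),
  with \<open>S_g = S 1_g\<close>, \<open>1_g = e g\<close> a central idempotent.\<close>
definition unital_partial_action ::
  "('g, 'b) groupoid_scheme \<Rightarrow> ('g \<Rightarrow> 'a::ring) \<Rightarrow> ('g \<Rightarrow> 'a \<Rightarrow> 'a) \<Rightarrow> bool" where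
  "unital_partial_action G e \<alpha> \<longleftrightarrow>
     (\<forall>g\<in>mor G. e g * e g = e g \<and> (\<forall>a. a * e g = e g * a))
   \<and> (\<forall>g\<in>mor G. ideal_of e g \<subseteq> ideal_of e (tgt G g))
   \<and> (\<forall>g\<in>mor G. ring_iso_on (\<alpha> g) (ideal_of e (gin G g)) (ideal_of e g))
   \<and> (\<forall>x\<in>objs G. \<forall>a\<in>ideal_of e x. \<alpha> x a = a)
   \<and> (\<forall>g\<in>mor G. \<forall>h\<in>mor G. src G g = tgt G h \<longrightarrow>
        (\<forall>a\<in>ideal_of e (gin G h). \<alpha> h a \<in> ideal_of e (gin G g) \<longrightarrow>
            a \<in> ideal_of e (gin G (cmp G g h)) \<and> \<alpha> g (\<alpha> h a) = \<alpha> (cmp G g h) a))"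

definition group_type_conn ::
  "('g, 'b) groupoid_scheme \<Rightarrow> ('g \<Rightarrow> 'a::ring) \<Rightarrow> 'g set \<Rightarrow> 'g set \<Rightarrow> bool" where
  "group_type_conn G e K K0 \<longleftrightarrow>
     (\<exists>x\<in>K0. \<exists>\<tau>. \<tau> x = x \<and>
        (\<forall>y\<in>K0. \<tau> y \<in> homs G K x y
           \<and> ideal_of e (gin G (\<tau> y)) = ideal_of e x \<and> ideal_of e (\<tau> y) = ideal_of e y))"

definition group_type_sub ::
  "('g, 'b) groupoid_scheme \<Rightarrow> ('g \<Rightarrow> 'a::ring) \<Rightarrow> 'g set \<Rightarrow> bool" where
  "group_type_sub G e H \<longleftrightarrow>
     (\<forall>Y\<in>component_objs G H. group_type_conn G e (component G H Y) Y)"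

definition invariants ::
  "('g, 'b) groupoid_scheme \<Rightarrow> ('g \<Rightarrow> 'a::ring) \<Rightarrow> ('g \<Rightarrow> 'a \<Rightarrow> 'a) \<Rightarrow> 'a set \<Rightarrow> 'g set \<Rightarrow> 'a set" where
  "invariants G e \<alpha> A K = {a \<in> A. \<forall>k\<in>K. \<alpha> k (a * e (gin G k)) = a * e k}"

end

theory Submission
  imports Defs
begin

text \<open>The idempotents 1_x (x an object) are central and orthogonal, so an element is determined
  by its components a 1_x, and the invariance condition for a morphism k of H involves only the
  components at the source and target of k, which lie in one connected component of H. This
  gives the first decomposition. The isomorphism is multiplication by the central idempotent
  1_{y_1} + ... + 1_{y_r} + 1_{S^c_H}. Since the restricted action is group-type, every object z of
  Y_j is reached from y_j by a morphism u of H with S_{u^-1} = S_{y_j} and S_u = S_z, so that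
  alpha_u is an isomorphism S_{y_j} -> S_z. An invariant element is therefore determined by its
  components at the y_j, and conversely, transporting H(y_j)-invariant elements of S_{y_j} along
  such morphisms gives an invariant element, because for k in H from z to w the conjugate
  v^-1 k u lies in H(y_j).\<close>

section \<open>Orthogonal central idempotents\<close>

lemma mem_ideal_of_iff:
  assumes "e g * e g = e g"
  shows "a \<in> ideal_of e g \<longleftrightarrow> a * e g = a"
proof
  assume "a \<in> ideal_of e g"
  then obtain b where "a = b * e g" unfolding ideal_of_def by blast
  then show "a * e g = a" using assms by (simp add: mult.assoc)
next
  assume "a * e g = a"
  then show "a \<in> ideal_of e g" unfolding ideal_of_def by (metis (mono_tags, lifting) mem_Collect_eq)
qed

lemma mem_dsumI: "(\<And>i. i \<in> I \<Longrightarrow> f i \<in> A i) \<Longrightarrow> sum f I \<in> dsum I A"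
  unfolding dsum_def by blast

lemma mem_dsumE:
  assumes "x \<in> dsum I A"
  obtains f where "x = sum f I" and "\<And>i. i \<in> I \<Longrightarrow> f i \<in> A i"
  using assms unfolding dsum_def by blast

lemma sum_mult_eq_single:
  fixes f :: "'i \<Rightarrow> 'a::ring"
  assumes "finite K" "k \<in> K" "\<And>l. l \<in> K \<Longrightarrow> l \<noteq> k \<Longrightarrow> f l * x = 0"
  shows "(\<Sum>l\<in>K. f l) * x = f k * x"
proof -
  have "(\<Sum>l\<in>K - {k}. f l * x) = 0"
    using assms(3) by (intro sum.neutral) blast
  then show ?thesis
    using assms(1,2) by (simp add: distrib_right sum_distrib_right sum.remove)
qed

lemma mult_image_unit:
  fixes f :: "'a::ring \<Rightarrow> 'a"
  assumes mult: "\<And>x y. x \<in> A \<Longrightarrow> y \<in> A \<Longrightarrow> f (x * y) = f x * f y"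
    and image: "f ` A = B"
    and u: "u \<in> A" "\<And>x. x \<in> A \<Longrightarrow> u * x = x"
    and v: "v \<in> B" "\<And>y. y \<in> B \<Longrightarrow> y * v = y"
  shows "f u = v"
proof -
  obtain x where x: "x \<in> A" "v = f x" using image v(1) by blast
  have "f u \<in> B" using image u(1) by blast
  then have "f u = f u * v" using v(2) by simp
  also have "\<dots> = f (u * x)" using mult[OF u(1) x(1)] x(2) by simp
  also have "\<dots> = v" using u(2)[OF x(1)] x(2) by simp
  finally show ?thesis .
qed

lemma ring_iso_on_mult_central_idem:
  fixes E :: "'a::ring"
  assumes "\<And>a. a * E = E * a" "E * E = E"
    and "inj_on (\<lambda>a. a * E) A" "(\<lambda>a. a * E) ` A = B"
  shows "ring_iso_on (\<lambda>a. a * E) A B"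
proof -
  have "(a * E) * (b * E) = a * b * E" for a b
  proof -
    have "(a * E) * (b * E) = a * (E * b) * E"
      by (simp add: mult.assoc)
    also have "\<dots> = a * b * (E * E)"
      by (simp only: assms(1)[of b, symmetric] mult.assoc)
    finally show ?thesis
      by (simp only: assms(2))
  qed
  then have "\<forall>a\<in>A. \<forall>b\<in>A. (a + b) * E = a * E + b * E \<and> a * b * E = (a * E) * (b * E)"
    by (simp add: distrib_right)
  then show ?thesis
    using assms(3,4) unfolding ring_iso_on_def bij_betw_def by blast
qed

locale idempotent_decomposition =
  fixes I :: "'i set" and e :: "'i \<Rightarrow> 'a::ring"
  assumes idem: "i \<in> I \<Longrightarrow> e i * e i = e i"
    and central: "i \<in> I \<Longrightarrow> a * e i = e i * a"
    and direct_sum: "internal_direct_sum I (ideal_of e) UNIV"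
begin

lemma finite_I: "finite I"
  using direct_sum unfolding internal_direct_sum_def by blast

lemma mem_ideal_iff: "i \<in> I \<Longrightarrow> a \<in> ideal_of e i \<longleftrightarrow> a * e i = a"
  by (simp add: idem mem_ideal_of_iff)

lemma mult_e_mem_ideal: "i \<in> I \<Longrightarrow> a * e i \<in> ideal_of e i"
  by (simp add: mem_ideal_iff idem mult.assoc)

lemma e_orthogonal:
  assumes "i \<in> I" "j \<in> I" "i \<noteq> j"
  shows "e i * e j = 0"
proof -
  let ?b = "e i * e j"
  \<comment> \<open>?b lies in S_i and in S_j, so 0 = ?b + (- ?b) is a decomposition of 0\<close>
  define f where "f k = (if k = i then ?b else if k = j then - ?b else 0)" for k
  have "?b \<in> ideal_of e i" "- ?b \<in> ideal_of e j"
    using assms central[of j] mult_e_mem_ideal[of j "- e i"] by (auto simp: mem_ideal_iff mult.assoc idem)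
  then have "\<forall>k\<in>I. f k \<in> ideal_of e k"
    using assms mult_e_mem_ideal[of _ 0] unfolding f_def by auto
  moreover have "sum f I = 0"
    using assms finite_I by (simp add: f_def sum.If_cases Int_absorb1 Diff_Int_distrib2)
  ultimately have "f i = 0"
    using direct_sum assms unfolding internal_direct_sum_def by blast
  then show ?thesis unfolding f_def by simp
qed

lemma mult_e_eq_zero:
  assumes "j \<in> I" "x \<in> ideal_of e j" "i \<in> I" "i \<noteq> j"
  shows "x * e i = 0"
proof -
  have "x * e i = x * (e j * e i)"
    using assms(1,2) by (metis mem_ideal_iff mult.assoc)
  then show ?thesis
    using assms e_orthogonal by simp
qed

lemma sum_ideal_mult_e:
  assumes "J \<subseteq> I" "\<And>j. j \<in> J \<Longrightarrow> \<beta> j \<in> ideal_of e j" "i \<in> I"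
  shows "(\<Sum>j\<in>J. \<beta> j) * e i = (if i \<in> J then \<beta> i else 0)"
proof -
  have "(\<Sum>j\<in>J. \<beta> j) * e i = (\<Sum>j\<in>J. if j = i then \<beta> i else 0)"
    unfolding sum_distrib_right
  proof (rule sum.cong)
    fix j assume "j \<in> J"
    then show "\<beta> j * e i = (if j = i then \<beta> i else 0)"
      using assms mult_e_eq_zero[of j "\<beta> j" i] mem_ideal_iff by auto
  qed simp
  then show ?thesis
    using finite_subset[OF assms(1) finite_I] by simp
qed

lemma sum_components: "(\<Sum>i\<in>I. a * e i) = a"
proof -
  obtain f where a: "a = sum f I" and f: "\<And>i. i \<in> I \<Longrightarrow> f i \<in> ideal_of e i"
    using direct_sum mem_dsumE[of a I "ideal_of e"] unfolding internal_direct_sum_def by blast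
  have "a * e i = f i" if "i \<in> I" for i
    using sum_ideal_mult_e[of I f i] f that a by simp
  then show ?thesis using a by simp
qed

lemma components_eqI: "(\<And>i. i \<in> I \<Longrightarrow> a * e i = b * e i) \<Longrightarrow> a = b"
  by (metis (no_types, lifting) sum_components sum.cong)

lemma mem_dsum_iff:
  assumes "J \<subseteq> I"
  shows "a \<in> dsum J (ideal_of e) \<longleftrightarrow> (\<forall>i\<in>I - J. a * e i = 0)"
proof
  assume "a \<in> dsum J (ideal_of e)"
  then obtain f where "a = sum f J" "\<And>j. j \<in> J \<Longrightarrow> f j \<in> ideal_of e j"
    by (rule mem_dsumE) blast
  then show "\<forall>i\<in>I - J. a * e i = 0"
    using sum_ideal_mult_e[OF assms] by auto
next
  assume "\<forall>i\<in>I - J. a * e i = 0"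
  then have "(\<Sum>j\<in>J. a * e j) = (\<Sum>i\<in>I. a * e i)"
    using assms finite_I by (intro sum.mono_neutral_left) auto
  then have "a = (\<Sum>j\<in>J. a * e j)"
    by (simp add: sum_components)
  moreover have "\<And>j. j \<in> J \<Longrightarrow> a * e j \<in> ideal_of e j"
    using assms mult_e_mem_ideal by blast
  ultimately show "a \<in> dsum J (ideal_of e)"
    using mem_dsumI by metis
qed

definition unit_on :: "'i set \<Rightarrow> 'a" where
  "unit_on J = (\<Sum>j\<in>J. e j)"

lemma mult_unit_on: "a * unit_on J = (\<Sum>j\<in>J. a * e j)"
  by (simp add: unit_on_def sum_distrib_left)

lemma unit_on_union: "J \<inter> K = {} \<Longrightarrow> J \<union> K \<subseteq> I \<Longrightarrow> unit_on (J \<union> K) = unit_on J + unit_on K"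
  unfolding unit_on_def using finite_I by (metis finite_subset le_sup_iff sum.union_disjoint)

lemma unit_on_Union:
  assumes "\<Union>\<Y> \<subseteq> I" "pairwise disjnt \<Y>"
  shows "unit_on (\<Union>\<Y>) = (\<Sum>Y\<in>\<Y>. unit_on Y)"
  unfolding unit_on_def
proof (rule sum.Union_disjoint[unfolded comp_def])
  show "\<forall>Y\<in>\<Y>. finite Y" using assms finite_I by (meson Sup_le_iff finite_subset)
  show "\<forall>Y\<in>\<Y>. \<forall>Z\<in>\<Y>. Y \<noteq> Z \<longrightarrow> Y \<inter> Z = {}" using assms(2) by (simp add: pairwise_def disjnt_def)
qed

lemma mult_unit_on_I: "a * unit_on I = a"
  by (simp add: mult_unit_on sum_components)

lemma mult_unit_on_mult_e:
  assumes "J \<subseteq> I" "i \<in> I"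
  shows "a * unit_on J * e i = (if i \<in> J then a * e i else 0)"
proof -
  have "\<And>j. j \<in> J \<Longrightarrow> a * e j \<in> ideal_of e j"
    using assms(1) mult_e_mem_ideal by blast
  then show ?thesis
    unfolding mult_unit_on using sum_ideal_mult_e[OF assms(1) _ assms(2), of "\<lambda>j. a * e j"] by simp
qed

lemma mult_unit_on_mem_dsum: "J \<subseteq> I \<Longrightarrow> a * unit_on J \<in> dsum J (ideal_of e)"
  by (simp add: mem_dsum_iff mult_unit_on_mult_e)

lemma mem_dsum_mult_unit_on:
  assumes "J \<subseteq> I" "a \<in> dsum J (ideal_of e)"
  shows "a * unit_on J = a"
proof (rule components_eqI)
  fix i assume "i \<in> I"
  then show "a * unit_on J * e i = a * e i"
    using assms mem_dsum_iff mult_unit_on_mult_e by auto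
qed

lemma unit_on_central: "J \<subseteq> I \<Longrightarrow> a * unit_on J = unit_on J * a"
  unfolding unit_on_def sum_distrib_left sum_distrib_right
  using central by (intro sum.cong) auto

lemma unit_on_idem:
  assumes "J \<subseteq> I"
  shows "unit_on J * unit_on J = unit_on J"
proof (rule mem_dsum_mult_unit_on[OF assms])
  have "\<And>j. j \<in> J \<Longrightarrow> e j \<in> ideal_of e j"
    using assms idem mem_ideal_iff by blast
  then show "unit_on J \<in> dsum J (ideal_of e)"
    unfolding unit_on_def by (rule mem_dsumI)
qed

end

section \<open>Groupoids and global morphisms of a partial action\<close>

locale groupoid =
  fixes G :: "('g, 'b) groupoid_scheme"
  assumes is_groupoid: "is_groupoid G"
begin

lemma obj_mor: "x \<in> objs G \<Longrightarrow> x \<in> mor G"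
  using is_groupoid unfolding is_groupoid_def objs_def by blast

lemma src_obj: "g \<in> mor G \<Longrightarrow> src G g \<in> objs G"
  unfolding objs_def by blast

lemma tgt_obj: "g \<in> mor G \<Longrightarrow> tgt G g \<in> objs G"
  using is_groupoid unfolding is_groupoid_def by blast

lemma src_of_obj: "x \<in> objs G \<Longrightarrow> src G x = x"
  and tgt_of_obj: "x \<in> objs G \<Longrightarrow> tgt G x = x"
  using is_groupoid unfolding is_groupoid_def by blast+

lemma cmp_mor [simp]: "g \<in> mor G \<Longrightarrow> h \<in> mor G \<Longrightarrow> src G g = tgt G h \<Longrightarrow> cmp G g h \<in> mor G"
  and src_cmp [simp]: "g \<in> mor G \<Longrightarrow> h \<in> mor G \<Longrightarrow> src G g = tgt G h \<Longrightarrow> src G (cmp G g h) = src G h"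
  and tgt_cmp [simp]: "g \<in> mor G \<Longrightarrow> h \<in> mor G \<Longrightarrow> src G g = tgt G h \<Longrightarrow> tgt G (cmp G g h) = tgt G g"
  using is_groupoid unfolding is_groupoid_def by blast+

lemma cmp_assoc:
  "f \<in> mor G \<Longrightarrow> g \<in> mor G \<Longrightarrow> h \<in> mor G \<Longrightarrow> src G f = tgt G g \<Longrightarrow> src G g = tgt G h \<Longrightarrow>
    cmp G (cmp G f g) h = cmp G f (cmp G g h)"
  using is_groupoid unfolding is_groupoid_def by blast

lemma cmp_tgt_left: "g \<in> mor G \<Longrightarrow> cmp G (tgt G g) g = g"
  and cmp_src_right: "g \<in> mor G \<Longrightarrow> cmp G g (src G g) = g"
  using is_groupoid unfolding is_groupoid_def by blast+

lemma gin_mor [simp]: "g \<in> mor G \<Longrightarrow> gin G g \<in> mor G"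
  and src_gin [simp]: "g \<in> mor G \<Longrightarrow> src G (gin G g) = tgt G g"
  and tgt_gin [simp]: "g \<in> mor G \<Longrightarrow> tgt G (gin G g) = src G g"
  and cmp_gin_right: "g \<in> mor G \<Longrightarrow> cmp G g (gin G g) = tgt G g"
  and cmp_gin_left: "g \<in> mor G \<Longrightarrow> cmp G (gin G g) g = src G g"
  using is_groupoid unfolding is_groupoid_def by blast+

lemma cmp_gin_cancel_left:
  assumes "g \<in> mor G" "h \<in> mor G" "src G g = tgt G h"
  shows "cmp G (gin G g) (cmp G g h) = h"
  using assms by (simp add: cmp_assoc[symmetric] cmp_gin_left cmp_tgt_left)

lemma gin_gin [simp]:
  assumes "g \<in> mor G"
  shows "gin G (gin G g) = g"
proof -
  have "gin G (gin G g) = cmp G (gin G (gin G g)) (cmp G (gin G g) g)"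
    using cmp_src_right[of "gin G (gin G g)"] assms by (simp add: cmp_gin_left)
  also have "\<dots> = g"
    using assms by (simp add: cmp_gin_cancel_left)
  finally show ?thesis .
qed

lemma cmp_cancel_gin_left:
  assumes "g \<in> mor G" "h \<in> mor G" "tgt G g = tgt G h"
  shows "cmp G g (cmp G (gin G g) h) = h"
  using cmp_gin_cancel_left[of "gin G g" h] assms by simp

lemma gin_cmp:
  assumes "g \<in> mor G" "h \<in> mor G" "src G g = tgt G h"
  shows "gin G (cmp G g h) = cmp G (gin G h) (gin G g)"
proof -
  have "cmp G (cmp G g h) (cmp G (gin G h) (gin G g)) = tgt G g"
    using assms by (simp add: cmp_assoc cmp_cancel_gin_left cmp_gin_right)
  then have "cmp G (gin G (cmp G g h)) (tgt G g) = cmp G (gin G h) (gin G g)"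
    using cmp_gin_cancel_left[of "cmp G g h" "cmp G (gin G h) (gin G g)"] assms by simp
  then show ?thesis
    using cmp_src_right[of "gin G (cmp G g h)"] assms by simp
qed

end

locale partial_action_on_sum = groupoid G for G :: "('g, 'b) groupoid_scheme" +
  fixes e :: "'g \<Rightarrow> 'a::ring" and \<alpha> :: "'g \<Rightarrow> 'a \<Rightarrow> 'a"
  assumes partial_action: "unital_partial_action G e \<alpha>"
    and sum_decomposition: "internal_direct_sum (objs G) (ideal_of e) UNIV"
begin

lemma mor_idem: "g \<in> mor G \<Longrightarrow> e g * e g = e g"
  and mor_central: "g \<in> mor G \<Longrightarrow> a * e g = e g * a"
  and ideal_subset_tgt: "g \<in> mor G \<Longrightarrow> ideal_of e g \<subseteq> ideal_of e (tgt G g)"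
  and alpha_iso: "g \<in> mor G \<Longrightarrow> ring_iso_on (\<alpha> g) (ideal_of e (gin G g)) (ideal_of e g)"
  and alpha_cmp: "g \<in> mor G \<Longrightarrow> h \<in> mor G \<Longrightarrow> src G g = tgt G h \<Longrightarrow> a \<in> ideal_of e (gin G h) \<Longrightarrow>
    \<alpha> h a \<in> ideal_of e (gin G g) \<Longrightarrow> a \<in> ideal_of e (gin G (cmp G g h)) \<and> \<alpha> g (\<alpha> h a) = \<alpha> (cmp G g h) a"
  using partial_action unfolding unital_partial_action_def by blast+

sublocale idempotent_decomposition "objs G" e
  using mor_idem mor_central obj_mor sum_decomposition by unfold_locales blast+

lemma mem_ideal_mor_iff: "g \<in> mor G \<Longrightarrow> a \<in> ideal_of e g \<longleftrightarrow> a * e g = a"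
  by (simp add: mem_ideal_of_iff mor_idem)

lemma e_mem_ideal: "g \<in> mor G \<Longrightarrow> e g \<in> ideal_of e g"
  by (simp add: mem_ideal_mor_iff mor_idem)

lemma ideal_of_cong: "e g = e h \<Longrightarrow> ideal_of e g = ideal_of e h"
  by (simp add: ideal_of_def)

lemma mult_e_mem_ideal_mor: "g \<in> mor G \<Longrightarrow> a * e g \<in> ideal_of e g"
  by (simp add: mem_ideal_mor_iff mor_idem mult.assoc)

lemma e_eqI:
  assumes "g \<in> mor G" "h \<in> mor G" "ideal_of e g = ideal_of e h"
  shows "e g = e h"
proof -
  have "e g * e h = e g" "e h * e g = e h"
    using assms e_mem_ideal mem_ideal_mor_iff by blast+
  then show ?thesis
    using mor_central[OF assms(1)] by metis
qed

lemma mult_e_tgt_mult_e: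
  assumes "g \<in> mor G"
  shows "a * e (tgt G g) * e g = a * e g"
proof -
  have "e g * e (tgt G g) = e g"
    using assms ideal_subset_tgt e_mem_ideal mem_ideal_iff tgt_obj by blast
  then show ?thesis
    using assms mor_central tgt_obj obj_mor by (metis mult.assoc)
qed

lemma mult_e_mor_cong:
  assumes "g \<in> mor G" "a * e (tgt G g) = b * e (tgt G g)"
  shows "a * e g = b * e g"
  using mult_e_tgt_mult_e[OF assms(1)] assms(2) by metis

lemma ideal_gin_subset_src: "g \<in> mor G \<Longrightarrow> ideal_of e (gin G g) \<subseteq> ideal_of e (src G g)"
  using ideal_subset_tgt[of "gin G g"] by simp

lemma alpha_mem: "g \<in> mor G \<Longrightarrow> a \<in> ideal_of e (gin G g) \<Longrightarrow> \<alpha> g a \<in> ideal_of e g"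
  and alpha_image: "g \<in> mor G \<Longrightarrow> \<alpha> g ` ideal_of e (gin G g) = ideal_of e g"
  and alpha_mult: "g \<in> mor G \<Longrightarrow> a \<in> ideal_of e (gin G g) \<Longrightarrow> b \<in> ideal_of e (gin G g) \<Longrightarrow>
    \<alpha> g (a * b) = \<alpha> g a * \<alpha> g b"
  using alpha_iso unfolding ring_iso_on_def bij_betw_def by blast+

text \<open>For these morphisms alpha_g is an isomorphism of S_{s(g)} onto S_{t(g)}; the transversals
  of a group-type action consist of them.\<close>

definition global_mor :: "'g \<Rightarrow> bool" where
  "global_mor g \<longleftrightarrow>
     g \<in> mor G \<and> ideal_of e (gin G g) = ideal_of e (src G g) \<and> ideal_of e g = ideal_of e (tgt G g)"

lemma global_mor_e:
  assumes "global_mor g"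
  shows "e (gin G g) = e (src G g)" and "e g = e (tgt G g)"
  using assms e_eqI src_obj tgt_obj obj_mor unfolding global_mor_def by auto

lemma global_mor_gin: "global_mor g \<Longrightarrow> global_mor (gin G g)"
  unfolding global_mor_def by auto

lemma global_mor_alpha_mem:
  "global_mor u \<Longrightarrow> a \<in> ideal_of e (src G u) \<Longrightarrow> \<alpha> u a \<in> ideal_of e (tgt G u)"
  using alpha_mem[of u a] unfolding global_mor_def by auto

lemma e_gin_cmp_global_left:
  assumes v: "global_mor v" and h: "h \<in> mor G" and vh: "src G v = tgt G h"
  shows "e (gin G (cmp G v h)) = e (gin G h)"
proof -
  let ?m = "cmp G v h"
  have vm: "v \<in> mor G" "ideal_of e (gin G v) = ideal_of e (src G v)"
    "ideal_of e v = ideal_of e (tgt G v)"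
    using v unfolding global_mor_def by auto
  have "a \<in> ideal_of e (gin G ?m)" if a: "a \<in> ideal_of e (gin G h)" for a
  proof -
    have "\<alpha> h a \<in> ideal_of e (gin G v)"
      using alpha_mem[OF h a] ideal_subset_tgt[OF h] vm(2) vh by auto
    then show ?thesis
      using alpha_cmp[OF vm(1) h vh a] by blast
  qed
  moreover have "a \<in> ideal_of e (gin G h)" if a: "a \<in> ideal_of e (gin G ?m)" for a
  proof -
    have "\<alpha> ?m a \<in> ideal_of e (gin G (gin G v))"
      using alpha_mem[of ?m a] ideal_subset_tgt[of ?m] a vm h vh by auto
    then have "a \<in> ideal_of e (gin G (cmp G (gin G v) ?m))"
      using alpha_cmp[of "gin G v" ?m a] a vm h vh by simp
    then show ?thesis
      using cmp_gin_cancel_left[OF vm(1) h vh] by simp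
  qed
  ultimately have "ideal_of e (gin G ?m) = ideal_of e (gin G h)"
    by blast
  then show ?thesis
    using e_eqI vm(1) h vh by simp
qed

lemma alpha_cmp_global_left:
  assumes v: "global_mor v" and h: "h \<in> mor G" and vh: "src G v = tgt G h"
    and a: "a \<in> ideal_of e (gin G h)"
  shows "\<alpha> (cmp G v h) a = \<alpha> v (\<alpha> h a)"
proof -
  have "\<alpha> h a \<in> ideal_of e (gin G v)"
    using alpha_mem[OF h a] ideal_subset_tgt[OF h] v vh unfolding global_mor_def by auto
  then show ?thesis
    using alpha_cmp[OF _ h vh a] v unfolding global_mor_def by simp
qed

lemma alpha_global_e:
  assumes v: "global_mor v" and h: "h \<in> mor G" and vh: "src G v = tgt G h"
  shows "\<alpha> v (e h) = e (cmp G v h)"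
proof (rule mult_image_unit[where f = "\<alpha> v" and A = "ideal_of e h" and B = "ideal_of e (cmp G v h)"])
  have vm: "v \<in> mor G" "ideal_of e (gin G v) = ideal_of e (src G v)"
    using v unfolding global_mor_def by auto
  have dom: "ideal_of e h \<subseteq> ideal_of e (gin G v)"
    using ideal_subset_tgt[OF h] vm vh by simp
  show "\<alpha> v (x * y) = \<alpha> v x * \<alpha> v y" if "x \<in> ideal_of e h" "y \<in> ideal_of e h" for x y
    using alpha_mult[OF vm(1)] dom that by blast
  have "\<alpha> v ` ideal_of e h = (\<lambda>x. \<alpha> v (\<alpha> h x)) ` ideal_of e (gin G h)"
    by (simp flip: alpha_image[OF h] add: image_image)
  also have "\<dots> = \<alpha> (cmp G v h) ` ideal_of e (gin G (cmp G v h))"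
    using alpha_cmp_global_left[OF assms] ideal_of_cong[OF e_gin_cmp_global_left[OF assms]]
    by (simp cong: image_cong)
  also have "\<dots> = ideal_of e (cmp G v h)"
    using alpha_image vm(1) h vh by simp
  finally show "\<alpha> v ` ideal_of e h = ideal_of e (cmp G v h)" .
  show "e h \<in> ideal_of e h" "e (cmp G v h) \<in> ideal_of e (cmp G v h)"
    using e_mem_ideal vm(1) h vh by simp_all
  show "e h * x = x" if "x \<in> ideal_of e h" for x
    using that mem_ideal_mor_iff[OF h] mor_central[OF h] by metis
  show "y * e (cmp G v h) = y" if "y \<in> ideal_of e (cmp G v h)" for y
    using that mem_ideal_mor_iff vm(1) h vh by simp
qed

lemma e_cmp_global_right:
  assumes u: "global_mor u" and k: "k \<in> mor G" and ku: "src G k = tgt G u"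
  shows "e (cmp G k u) = e k"
proof -
  have um: "u \<in> mor G" using u unfolding global_mor_def by simp
  have "e (gin G (cmp G (gin G u) (gin G k))) = e k"
    using e_gin_cmp_global_left[OF global_mor_gin[OF u], of "gin G k"] um k ku by simp
  then show ?thesis
    using gin_cmp[OF k um ku] um k ku by (metis cmp_mor gin_gin)
qed

lemma alpha_global_e_gin:
  assumes u: "global_mor u" and k: "k \<in> mor G" and ku: "src G k = tgt G u"
  shows "\<alpha> u (e (gin G (cmp G k u))) = e (gin G k)"
proof -
  have um: "u \<in> mor G" using u unfolding global_mor_def by simp
  have "\<alpha> u (e (cmp G (gin G u) (gin G k))) = e (cmp G u (cmp G (gin G u) (gin G k)))"
    using alpha_global_e[OF u, of "cmp G (gin G u) (gin G k)"] um k ku by simp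
  then show ?thesis
    using gin_cmp[OF k um ku] cmp_cancel_gin_left[of u "gin G k"] um k ku by simp
qed

lemma alpha_cmp_global_right:
  assumes u: "global_mor u" and k: "k \<in> mor G" and ku: "src G k = tgt G u"
    and a: "a \<in> ideal_of e (gin G (cmp G k u))"
  shows "\<alpha> (cmp G k u) a = \<alpha> k (\<alpha> u a)"
proof -
  have um: "u \<in> mor G" "ideal_of e (gin G u) = ideal_of e (src G u)"
    using u unfolding global_mor_def by auto
  have dom: "ideal_of e (gin G (cmp G k u)) \<subseteq> ideal_of e (gin G u)"
    using ideal_gin_subset_src[of "cmp G k u"] um k ku by simp
  have au: "a \<in> ideal_of e (gin G u)" "e (gin G (cmp G k u)) \<in> ideal_of e (gin G u)"
    using a dom e_mem_ideal[of "gin G (cmp G k u)"] um k ku by auto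
  then have "\<alpha> u (a * e (gin G (cmp G k u))) = \<alpha> u a * e (gin G k)"
    using alpha_mult[OF um(1)] alpha_global_e_gin[OF u k ku] by simp
  moreover have "a * e (gin G (cmp G k u)) = a"
    using a mem_ideal_mor_iff[of "gin G (cmp G k u)" a] um k ku by simp
  ultimately have "\<alpha> u a * e (gin G k) = \<alpha> u a"
    by simp
  then have "\<alpha> u a \<in> ideal_of e (gin G k)"
    using mult_e_mem_ideal_mor[of "gin G k" "\<alpha> u a"] k by simp
  then show ?thesis
    using alpha_cmp[OF k um(1) ku au(1)] by simp
qed

lemma alpha_conjugate_invariant:
  fixes u v k :: 'g
  defines "h \<equiv> cmp G (gin G v) (cmp G k u)"
  assumes u: "global_mor u" and v: "global_mor v" and k: "k \<in> mor G"
    and ku: "src G k = tgt G u" and kv: "tgt G k = tgt G v" and vu: "src G v = src G u"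
    and b: "b \<in> ideal_of e (src G u)"
    and inv: "\<alpha> h (b * e (gin G h)) = b * e h"
  shows "\<alpha> k (\<alpha> u b * e (gin G k)) = \<alpha> v b * e k"
proof -
  let ?m = "cmp G k u"
  have um: "u \<in> mor G" "ideal_of e (gin G u) = ideal_of e (src G u)"
    and vm: "v \<in> mor G" "ideal_of e (gin G v) = ideal_of e (src G v)"
    using u v unfolding global_mor_def by auto
  have m: "?m \<in> mor G" "tgt G ?m = tgt G v"
    using um vm k ku kv by simp_all
  have hm: "h \<in> mor G" "src G v = tgt G h" "cmp G v h = ?m"
    unfolding h_def using um vm k ku kv m cmp_cancel_gin_left[of v ?m] by simp_all
  have bv: "b \<in> ideal_of e (gin G v)" and bu: "b \<in> ideal_of e (gin G u)"
    using b vu um vm by simp_all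
  have ehv: "e h \<in> ideal_of e (gin G v)"
    using e_mem_ideal[OF hm(1)] ideal_subset_tgt[OF hm(1)] hm(2) vm by auto
  have em: "e (gin G ?m) \<in> ideal_of e (gin G u)"
    using e_mem_ideal ideal_gin_subset_src[of ?m] m um ku k by auto
  have "\<alpha> v b * e k = \<alpha> v b * \<alpha> v (e h)"
    using alpha_global_e[OF v hm(1,2)] e_cmp_global_right[OF u k ku] hm(3) by simp
  also have "\<dots> = \<alpha> v (\<alpha> h (b * e (gin G h)))"
    using alpha_mult[OF vm(1) bv ehv] inv by simp
  also have "\<dots> = \<alpha> ?m (b * e (gin G ?m))"
    using alpha_cmp_global_left[OF v hm(1,2)] e_gin_cmp_global_left[OF v hm(1,2)] hm(1,3)
      mult_e_mem_ideal_mor by simp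
  also have "\<dots> = \<alpha> k (\<alpha> u b * \<alpha> u (e (gin G ?m)))"
    using alpha_cmp_global_right[OF u k ku] alpha_mult[OF um(1) bu em] m mult_e_mem_ideal_mor by simp
  also have "\<dots> = \<alpha> k (\<alpha> u b * e (gin G k))"
    using alpha_global_e_gin[OF u k ku] by simp
  finally show ?thesis ..
qed

lemma global_mor_cmp:
  assumes v: "global_mor v" and h: "global_mor h" and vh: "src G v = tgt G h"
  shows "global_mor (cmp G v h)"
proof -
  have vm: "v \<in> mor G" "ideal_of e v = ideal_of e (tgt G v)"
    and hm: "h \<in> mor G" "ideal_of e (gin G h) = ideal_of e (src G h)"
    using v h unfolding global_mor_def by auto
  have "ideal_of e (gin G (cmp G v h)) = ideal_of e (src G (cmp G v h))"
    using ideal_of_cong[OF e_gin_cmp_global_left[OF v hm(1) vh]] hm vm vh by simp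
  moreover have "ideal_of e (cmp G v h) = ideal_of e (tgt G (cmp G v h))"
    using ideal_of_cong[OF e_cmp_global_right[OF h vm(1) vh]] hm vm vh by simp
  ultimately show ?thesis
    using vm hm vh unfolding global_mor_def by simp
qed

lemma invariant_global_transport:
  assumes "a \<in> invariants G e \<alpha> A K" "u \<in> K" "global_mor u"
  shows "\<alpha> u (a * e (src G u)) = a * e (tgt G u)"
  using assms global_mor_e[OF assms(3)] unfolding invariants_def by auto

end

section \<open>Invariants of a group-type subgroupoid\<close>

locale subgroupoid_action = partial_action_on_sum G e \<alpha>
  for G :: "('g, 'b) groupoid_scheme" and e :: "'g \<Rightarrow> 'a::ring" and \<alpha> +
  fixes H :: "'g set" and pick :: "'g set \<Rightarrow> 'g"
  assumes subgroupoid: "subgroupoid H G"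
    and group_type: "group_type_sub G e H"
    and pick: "Y \<in> component_objs G H \<Longrightarrow> pick Y \<in> Y"
begin

lemma H_mor: "h \<in> H \<Longrightarrow> h \<in> mor G"
  and H_src: "h \<in> H \<Longrightarrow> src G h \<in> H"
  and H_gin: "h \<in> H \<Longrightarrow> gin G h \<in> H"
  and H_cmp: "g \<in> H \<Longrightarrow> h \<in> H \<Longrightarrow> src G g = tgt G h \<Longrightarrow> cmp G g h \<in> H"
  using subgroupoid unfolding subgroupoid_def by blast+

lemma sobjs_subset_objs: "sobjs G H \<subseteq> objs G"
  unfolding sobjs_def using H_mor src_obj by blast

lemma src_in_sobjs: "h \<in> H \<Longrightarrow> src G h \<in> sobjs G H"
  unfolding sobjs_def by blast

lemma tgt_in_sobjs: "h \<in> H \<Longrightarrow> tgt G h \<in> sobjs G H"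
  using src_in_sobjs[of "gin G h"] H_gin H_mor by simp

definition orbit :: "'g \<Rightarrow> 'g set" where
  "orbit x = {y \<in> sobjs G H. homs G H x y \<noteq> {}}"

lemma mem_orbit_iff: "y \<in> orbit x \<longleftrightarrow> (\<exists>h\<in>H. src G h = x \<and> tgt G h = y)"
  unfolding orbit_def homs_def using tgt_in_sobjs by blast

lemma component_objs_eq: "component_objs G H = orbit ` sobjs G H"
  unfolding component_objs_def orbit_def ..

lemma orbit_refl:
  assumes "x \<in> sobjs G H"
  shows "x \<in> orbit x"
proof -
  obtain h where h: "h \<in> H" "x = src G h"
    using assms unfolding sobjs_def by blast
  then have "x \<in> H" "src G x = x" "tgt G x = x"
    using H_src H_mor src_obj src_of_obj tgt_of_obj by auto
  then show ?thesis
    unfolding mem_orbit_iff by blast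
qed

lemma orbit_subset:
  assumes "y \<in> orbit x"
  shows "orbit y \<subseteq> orbit x"
proof
  fix w assume "w \<in> orbit y"
  then obtain h where h: "h \<in> H" "src G h = y" "tgt G h = w"
    unfolding mem_orbit_iff by blast
  obtain g where g: "g \<in> H" "src G g = x" "tgt G g = y"
    using assms unfolding mem_orbit_iff by blast
  have "cmp G h g \<in> H" "src G (cmp G h g) = x" "tgt G (cmp G h g) = w"
    using H_cmp H_mor g h by simp_all
  then show "w \<in> orbit x"
    unfolding mem_orbit_iff by blast
qed

lemma orbit_eq:
  assumes "y \<in> orbit x"
  shows "orbit y = orbit x"
proof
  show "orbit y \<subseteq> orbit x" using orbit_subset[OF assms] .
  obtain h where "h \<in> H" "src G h = x" "tgt G h = y"
    using assms unfolding mem_orbit_iff by blast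
  then have "x \<in> orbit y"
    unfolding mem_orbit_iff using H_gin H_mor by (metis src_gin tgt_gin)
  then show "orbit x \<subseteq> orbit y" by (rule orbit_subset)
qed

lemma component_objs_orbit: "Y \<in> component_objs G H \<Longrightarrow> z \<in> Y \<Longrightarrow> Y = orbit z"
  unfolding component_objs_eq using orbit_eq by blast

lemma orbit_in_component_objs: "x \<in> sobjs G H \<Longrightarrow> orbit x \<in> component_objs G H"
  unfolding component_objs_eq by blast

lemma Union_component_objs: "\<Union>(component_objs G H) = sobjs G H"
  unfolding component_objs_eq using orbit_refl by (auto simp: orbit_def)

lemma component_objs_disjoint: "pairwise disjnt (component_objs G H)"
  unfolding pairwise_def disjnt_def using component_objs_orbit by blast

lemma finite_component_objs: "finite (component_objs G H)"
  unfolding component_objs_eq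
  using finite_subset[OF sobjs_subset_objs finite_I] by blast

lemma mor_in_component:
  "k \<in> H \<Longrightarrow> k \<in> component G H (orbit (src G k)) \<and> tgt G k \<in> orbit (src G k)"
  unfolding component_def mem_orbit_iff using orbit_refl[OF src_in_sobjs] mem_orbit_iff by blast

lemma orbit_pick: "Y \<in> component_objs G H \<Longrightarrow> orbit (pick Y) = Y"
  using component_objs_orbit pick by metis

lemma inj_on_pick: "inj_on pick (component_objs G H)"
  using orbit_pick by (metis inj_onI)

lemma global_path:
  assumes Y: "Y \<in> component_objs G H" and z: "z \<in> Y"
  shows "\<exists>u\<in>H. src G u = pick Y \<and> tgt G u = z \<and> global_mor u"
proof -
  have "group_type_conn G e (component G H Y) Y"
    using group_type Y unfolding group_type_sub_def by blast
  then obtain x \<tau> where \<tau>: "\<forall>y\<in>Y. \<tau> y \<in> homs G (component G H Y) x y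
      \<and> ideal_of e (gin G (\<tau> y)) = ideal_of e x \<and> ideal_of e (\<tau> y) = ideal_of e y"
    unfolding group_type_conn_def by blast
  have \<tau>H: "\<tau> y \<in> H \<and> src G (\<tau> y) = x \<and> tgt G (\<tau> y) = y \<and> global_mor (\<tau> y)" if "y \<in> Y" for y
  proof -
    have "\<tau> y \<in> H" "src G (\<tau> y) = x" "tgt G (\<tau> y) = y"
      using \<tau> that unfolding homs_def component_def by auto
    moreover from this have "global_mor (\<tau> y)"
      using \<tau> that H_mor unfolding global_mor_def by simp
    ultimately show ?thesis by blast
  qed
  obtain u w where u: "u \<in> H" "src G u = x" "tgt G u = z" "global_mor u"
    and w: "w \<in> H" "src G w = x" "tgt G w = pick Y" "global_mor w"
    using \<tau>H[OF z] \<tau>H[OF pick[OF Y]] by blast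
  have "cmp G u (gin G w) \<in> H" "src G (cmp G u (gin G w)) = pick Y" "tgt G (cmp G u (gin G w)) = z"
    using u w H_cmp H_gin H_mor by simp_all
  moreover have "global_mor (cmp G u (gin G w))"
    using global_mor_cmp[OF u(4) global_mor_gin[OF w(4)]] u w H_mor by simp
  ultimately show ?thesis by blast
qed

lemma component_sum_mult_e:
  assumes f: "\<And>Y. Y \<in> component_objs G H \<Longrightarrow> f Y \<in> dsum Y (ideal_of e)"
    and c: "c \<in> dsum (objs G - sobjs G H) (ideal_of e)"
    and z: "z \<in> sobjs G H"
  shows "((\<Sum>Y\<in>component_objs G H. f Y) + c) * e z = f (orbit z) * e z"
proof -
  have zO: "z \<in> objs G" using z sobjs_subset_objs by blast
  have "f Y * e z = 0" if "Y \<in> component_objs G H" "Y \<noteq> orbit z" for Y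
  proof -
    have "z \<notin> Y" using that component_objs_orbit by blast
    then show ?thesis
      using f[OF that(1)] mem_dsum_iff[of Y] that(1) zO Union_component_objs sobjs_subset_objs by blast
  qed
  then have "(\<Sum>Y\<in>component_objs G H. f Y) * e z = f (orbit z) * e z"
    using finite_component_objs orbit_in_component_objs[OF z] by (intro sum_mult_eq_single)
  moreover have "c * e z = 0"
    using c z zO mem_dsum_iff[of "objs G - sobjs G H" c] by blast
  ultimately show ?thesis
    by (simp add: distrib_right)
qed

lemma component_objs_subset_objs: "Y \<in> component_objs G H \<Longrightarrow> Y \<subseteq> objs G"
  using Union_component_objs sobjs_subset_objs by blast

lemma mult_unit_on_component_invariant:
  assumes a: "a \<in> invariants G e \<alpha> UNIV H" and Y: "Y \<in> component_objs G H"
  shows "a * unit_on Y \<in> invariants G e \<alpha> (dsum Y (ideal_of e)) (component G H Y)"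
proof -
  have YO: "Y \<subseteq> objs G" using component_objs_subset_objs[OF Y] .
  have eq: "a * unit_on Y * e g = a * e g" if "g \<in> mor G" "tgt G g \<in> Y" for g
    using mult_e_mor_cong[OF that(1), of "a * unit_on Y" a] mult_unit_on_mult_e[OF YO tgt_obj[OF that(1)]]
      that(2) by simp
  have "\<alpha> k (a * unit_on Y * e (gin G k)) = a * unit_on Y * e k" if k: "k \<in> component G H Y" for k
  proof -
    have "k \<in> H" "src G k \<in> Y" "tgt G k \<in> Y" using k unfolding component_def by auto
    then show ?thesis
      using eq[of k] eq[of "gin G k"] a H_mor unfolding invariants_def by simp
  qed
  then show ?thesis
    using mult_unit_on_mem_dsum[OF YO] unfolding invariants_def by blast
qed

lemma sum_mult_unit_on_components:
  "a = (\<Sum>Y\<in>component_objs G H. a * unit_on Y) + a * unit_on (objs G - sobjs G H)"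
proof -
  have "a = a * unit_on (sobjs G H \<union> (objs G - sobjs G H))"
    using sobjs_subset_objs mult_unit_on_I by (simp add: Un_absorb1)
  also have "unit_on (sobjs G H \<union> (objs G - sobjs G H)) = unit_on (sobjs G H) + unit_on (objs G - sobjs G H)"
    using sobjs_subset_objs by (intro unit_on_union) auto
  also have "unit_on (sobjs G H) = (\<Sum>Y\<in>component_objs G H. unit_on Y)"
    using unit_on_Union[OF _ component_objs_disjoint] sobjs_subset_objs Union_component_objs by simp
  finally show ?thesis
    by (simp add: distrib_left sum_distrib_left)
qed

lemma component_sum_invariant:
  assumes f: "\<And>Y. Y \<in> component_objs G H \<Longrightarrow>
      f Y \<in> invariants G e \<alpha> (dsum Y (ideal_of e)) (component G H Y)"
    and c: "c \<in> dsum (objs G - sobjs G H) (ideal_of e)"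
  shows "(\<Sum>Y\<in>component_objs G H. f Y) + c \<in> invariants G e \<alpha> UNIV H"
proof -
  let ?a = "(\<Sum>Y\<in>component_objs G H. f Y) + c"
  have fY: "f Y \<in> dsum Y (ideal_of e)" if "Y \<in> component_objs G H" for Y
    using f[OF that] unfolding invariants_def by blast
  have "\<alpha> k (?a * e (gin G k)) = ?a * e k" if k: "k \<in> H" for k
  proof -
    let ?Y = "orbit (src G k)"
    have Y: "?Y \<in> component_objs G H" "k \<in> component G H ?Y" "tgt G k \<in> ?Y"
      using orbit_in_component_objs[OF src_in_sobjs[OF k]] mor_in_component[OF k] by auto
    have eq: "?a * e g = f ?Y * e g" if "g \<in> mor G" "tgt G g \<in> ?Y" for g
    proof (rule mult_e_mor_cong[OF that(1)])
      have "tgt G g \<in> sobjs G H" "orbit (tgt G g) = ?Y"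
        using that(2) orbit_eq unfolding orbit_def by auto
      then show "?a * e (tgt G g) = f ?Y * e (tgt G g)"
        using component_sum_mult_e[OF fY c, of "tgt G g"] by simp
    qed
    have "\<alpha> k (f ?Y * e (gin G k)) = f ?Y * e k"
      using f[OF Y(1)] Y(2) unfolding invariants_def by blast
    then show ?thesis
      using eq[of k] eq[of "gin G k"] Y(3) H_mor[OF k] orbit_refl[OF src_in_sobjs[OF k]] by simp
  qed
  then show ?thesis
    unfolding invariants_def by blast
qed

lemma invariants_eq_component_sum:
  "invariants G e \<alpha> UNIV H =
     {a + c | a c.
        a \<in> dsum (component_objs G H)
               (\<lambda>Y. invariants G e \<alpha> (dsum Y (ideal_of e)) (component G H Y))
      \<and> c \<in> dsum (objs G - sobjs G H) (ideal_of e)}"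
  (is "_ = ?T")
proof (intro set_eqI iffI)
  fix a assume a: "a \<in> invariants G e \<alpha> UNIV H"
  have "(\<Sum>Y\<in>component_objs G H. a * unit_on Y)
      \<in> dsum (component_objs G H) (\<lambda>Y. invariants G e \<alpha> (dsum Y (ideal_of e)) (component G H Y))"
    using mult_unit_on_component_invariant[OF a] by (rule mem_dsumI)
  moreover have "a * unit_on (objs G - sobjs G H) \<in> dsum (objs G - sobjs G H) (ideal_of e)"
    by (rule mult_unit_on_mem_dsum) blast
  ultimately show "a \<in> ?T"
    using sum_mult_unit_on_components[of a] by blast
next
  fix a assume "a \<in> ?T"
  then obtain a' c where a: "a = a' + c" and c: "c \<in> dsum (objs G - sobjs G H) (ideal_of e)"
    and a': "a' \<in> dsum (component_objs G H)
                       (\<lambda>Y. invariants G e \<alpha> (dsum Y (ideal_of e)) (component G H Y))"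
    by blast
  from a' obtain f where "a' = (\<Sum>Y\<in>component_objs G H. f Y)"
    and "\<And>Y. Y \<in> component_objs G H \<Longrightarrow>
      f Y \<in> invariants G e \<alpha> (dsum Y (ideal_of e)) (component G H Y)"
    by (rule mem_dsumE) blast
  then show "a \<in> invariants G e \<alpha> UNIV H"
    using component_sum_invariant[OF _ c] a by simp
qed

section \<open>Reduction to the chosen objects\<close>

lemma pick_in_sobjs: "Y \<in> component_objs G H \<Longrightarrow> pick Y \<in> sobjs G H"
  using pick Union_component_objs by blast

text \<open>The idempotent 1_{y_1} + ... + 1_{y_r} + 1_{S^c_H}; multiplication by it is the isomorphism.\<close>

definition pick_unit :: 'a where
  "pick_unit = unit_on (pick ` component_objs G H \<union> (objs G - sobjs G H))"

lemma picks_subset_objs: "pick ` component_objs G H \<union> (objs G - sobjs G H) \<subseteq> objs G"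
  using pick_in_sobjs sobjs_subset_objs by blast

lemma mult_pick_unit:
  "a * pick_unit = (\<Sum>Y\<in>component_objs G H. a * e (pick Y)) + a * unit_on (objs G - sobjs G H)"
proof -
  have "pick_unit = unit_on (pick ` component_objs G H) + unit_on (objs G - sobjs G H)"
    unfolding pick_unit_def using pick_in_sobjs picks_subset_objs by (intro unit_on_union) auto
  moreover have "unit_on (pick ` component_objs G H) = (\<Sum>Y\<in>component_objs G H. e (pick Y))"
    unfolding unit_on_def using inj_on_pick by (simp add: sum.reindex)
  ultimately show ?thesis
    by (simp add: distrib_left sum_distrib_left)
qed

lemma mult_e_pick_invariant:
  assumes a: "a \<in> invariants G e \<alpha> UNIV H" and Y: "Y \<in> component_objs G H"
  shows "a * e (pick Y) \<in> invariants G e \<alpha> (ideal_of e (pick Y)) (homs G H (pick Y) (pick Y))"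
proof -
  have pO: "pick Y \<in> objs G" using pick_in_sobjs[OF Y] sobjs_subset_objs by blast
  have eq: "a * e (pick Y) * e g = a * e g" if "g \<in> mor G" "tgt G g = pick Y" for g
    using mult_e_tgt_mult_e[OF that(1)] that(2) by simp
  have "\<alpha> h (a * e (pick Y) * e (gin G h)) = a * e (pick Y) * e h" if "h \<in> homs G H (pick Y) (pick Y)" for h
    using that eq[of h] eq[of "gin G h"] a H_mor unfolding homs_def invariants_def by simp
  then show ?thesis
    using mult_e_mem_ideal[OF pO] unfolding invariants_def by blast
qed

lemma invariant_eqI:
  assumes a: "a \<in> invariants G e \<alpha> UNIV H" and b: "b \<in> invariants G e \<alpha> UNIV H"
    and eq: "\<And>z. z \<in> pick ` component_objs G H \<union> (objs G - sobjs G H) \<Longrightarrow> a * e z = b * e z"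
  shows "a = b"
proof (rule components_eqI)
  fix z assume z: "z \<in> objs G"
  show "a * e z = b * e z"
  proof (cases "z \<in> sobjs G H")
    case True
    let ?Y = "orbit z"
    have Y: "?Y \<in> component_objs G H" "z \<in> ?Y"
      using orbit_in_component_objs orbit_refl True by auto
    then obtain u where u: "u \<in> H" "src G u = pick ?Y" "tgt G u = z" "global_mor u"
      using global_path by blast
    have "a * e z = \<alpha> u (a * e (pick ?Y))"
      using invariant_global_transport[OF a u(1,4)] u(2,3) by simp
    also have "\<dots> = \<alpha> u (b * e (pick ?Y))"
      using eq Y(1) by simp
    also have "\<dots> = b * e z"
      using invariant_global_transport[OF b u(1,4)] u(2,3) by simp
    finally show ?thesis .
  next
    case False
    then show ?thesis using eq z by blast
  qed
qed

lemma mult_pick_unit_mult_e: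
  "z \<in> pick ` component_objs G H \<union> (objs G - sobjs G H) \<Longrightarrow> a * pick_unit * e z = a * e z"
  unfolding pick_unit_def using mult_unit_on_mult_e[OF picks_subset_objs] picks_subset_objs by auto

lemma inj_on_mult_pick_unit: "inj_on (\<lambda>a. a * pick_unit) (invariants G e \<alpha> UNIV H)"
proof (rule inj_onI)
  fix a b
  assume a: "a \<in> invariants G e \<alpha> UNIV H" and b: "b \<in> invariants G e \<alpha> UNIV H"
    and eq: "a * pick_unit = b * pick_unit"
  show "a = b"
  proof (rule invariant_eqI[OF a b])
    fix z assume "z \<in> pick ` component_objs G H \<union> (objs G - sobjs G H)"
    then show "a * e z = b * e z"
      using mult_pick_unit_mult_e eq by metis
  qed
qed

definition path_to :: "'g \<Rightarrow> 'g" where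
  "path_to z = (SOME u. u \<in> H \<and> src G u = pick (orbit z) \<and> tgt G u = z \<and> global_mor u)"

lemma path_to:
  assumes "z \<in> sobjs G H"
  shows "path_to z \<in> H" "src G (path_to z) = pick (orbit z)" "tgt G (path_to z) = z"
    and "global_mor (path_to z)"
proof -
  have "\<exists>u. u \<in> H \<and> src G u = pick (orbit z) \<and> tgt G u = z \<and> global_mor u"
    using global_path[OF orbit_in_component_objs[OF assms] orbit_refl[OF assms]] by blast
  then have "path_to z \<in> H \<and> src G (path_to z) = pick (orbit z) \<and> tgt G (path_to z) = z
      \<and> global_mor (path_to z)"
    unfolding path_to_def by (rule someI_ex)
  then show "path_to z \<in> H" "src G (path_to z) = pick (orbit z)" "tgt G (path_to z) = z"
    and "global_mor (path_to z)"
    by blast+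
qed

text \<open>The inverse of multiplication by pick_unit: the component at y_j is transported to every
  object of Y_j along a global morphism of H.\<close>

definition extend :: "('g set \<Rightarrow> 'a) \<Rightarrow> 'a \<Rightarrow> 'a" where
  "extend b c = (\<Sum>z\<in>sobjs G H. \<alpha> (path_to z) (b (orbit z))) + c"

lemma extend_mult_e:
  assumes b: "\<And>Y. Y \<in> component_objs G H \<Longrightarrow> b Y \<in> ideal_of e (pick Y)"
    and c: "c \<in> dsum (objs G - sobjs G H) (ideal_of e)"
    and z: "z \<in> objs G"
  shows "extend b c * e z = (if z \<in> sobjs G H then \<alpha> (path_to z) (b (orbit z)) else c * e z)"
proof -
  have "\<alpha> (path_to y) (b (orbit y)) \<in> ideal_of e y" if y: "y \<in> sobjs G H" for y
  proof -
    have "b (orbit y) \<in> ideal_of e (src G (path_to y))"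
      using b[OF orbit_in_component_objs[OF y]] path_to(2)[OF y] by simp
    then show ?thesis
      using global_mor_alpha_mem[OF path_to(4)[OF y]] path_to(3)[OF y] by simp
  qed
  then have "(\<Sum>y\<in>sobjs G H. \<alpha> (path_to y) (b (orbit y))) * e z
      = (if z \<in> sobjs G H then \<alpha> (path_to z) (b (orbit z)) else 0)"
    by (rule sum_ideal_mult_e[OF sobjs_subset_objs _ z])
  moreover have "c * e z = 0" if "z \<in> sobjs G H"
    using c z that mem_dsum_iff[of "objs G - sobjs G H" c] by blast
  ultimately show ?thesis
    unfolding extend_def by (simp add: distrib_right)
qed

lemma extend_invariant:
  assumes b: "\<And>Y. Y \<in> component_objs G H \<Longrightarrow>
      b Y \<in> invariants G e \<alpha> (ideal_of e (pick Y)) (homs G H (pick Y) (pick Y))"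
    and c: "c \<in> dsum (objs G - sobjs G H) (ideal_of e)"
  shows "extend b c \<in> invariants G e \<alpha> UNIV H"
proof -
  have bS: "b Y \<in> ideal_of e (pick Y)" if "Y \<in> component_objs G H" for Y
    using b[OF that] unfolding invariants_def by blast
  have extend_mult_e_mor: "extend b c * e g = \<alpha> (path_to y) (b (orbit y)) * e g"
    if "g \<in> mor G" "tgt G g = y" "y \<in> sobjs G H" for g y
  proof -
    have "extend b c * e g = extend b c * e y * e g"
      using mult_e_tgt_mult_e[OF that(1)] that(2) by simp
    then show ?thesis
      using extend_mult_e[OF bS c, of y] that(3) sobjs_subset_objs by auto
  qed
  have "\<alpha> k (extend b c * e (gin G k)) = extend b c * e k" if k: "k \<in> H" for k
  proof -
    define z w where "z = src G k" and "w = tgt G k"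
    define Y where "Y = orbit z"
    let ?u = "path_to z" and ?v = "path_to w"
    have zw: "z \<in> sobjs G H" "w \<in> sobjs G H" "orbit w = Y"
      using src_in_sobjs[OF k] tgt_in_sobjs[OF k] orbit_eq mor_in_component[OF k]
      unfolding z_def w_def Y_def by auto
    have Y: "Y \<in> component_objs G H"
      using orbit_in_component_objs[OF zw(1)] unfolding Y_def .
    have km: "k \<in> mor G" "src G k = tgt G ?u" "tgt G k = tgt G ?v"
      using H_mor[OF k] path_to(3)[OF zw(1)] path_to(3)[OF zw(2)] unfolding z_def w_def by auto
    have uv: "src G ?v = src G ?u" "src G ?u = pick Y"
      using path_to(2)[OF zw(1)] path_to(2)[OF zw(2)] zw(3) unfolding Y_def by auto
    have "cmp G (gin G ?v) (cmp G k ?u) \<in> homs G H (pick Y) (pick Y)"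
      using path_to(1)[OF zw(1)] path_to(1)[OF zw(2)] k km uv H_mor H_cmp H_gin
      unfolding homs_def by simp
    then have "\<alpha> (cmp G (gin G ?v) (cmp G k ?u)) (b Y * e (gin G (cmp G (gin G ?v) (cmp G k ?u))))
        = b Y * e (cmp G (gin G ?v) (cmp G k ?u))"
      using b[OF Y] unfolding invariants_def by blast
    then have "\<alpha> k (\<alpha> ?u (b Y) * e (gin G k)) = \<alpha> ?v (b Y) * e k"
      using alpha_conjugate_invariant[OF path_to(4)[OF zw(1)] path_to(4)[OF zw(2)] km uv(1)] bS[OF Y] uv(2)
      by simp
    moreover have "extend b c * e (gin G k) = \<alpha> ?u (b Y) * e (gin G k)"
      using extend_mult_e_mor[of "gin G k" z] km zw(1) unfolding z_def Y_def by simp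
    moreover have "extend b c * e k = \<alpha> ?v (b Y) * e k"
      using extend_mult_e_mor[of k w] km zw unfolding w_def by simp
    ultimately show ?thesis
      by simp
  qed
  then show ?thesis
    unfolding invariants_def by blast
qed

lemma extend_mult_pick_unit:
  assumes b: "\<And>Y. Y \<in> component_objs G H \<Longrightarrow>
      b Y \<in> invariants G e \<alpha> (ideal_of e (pick Y)) (homs G H (pick Y) (pick Y))"
    and c: "c \<in> dsum (objs G - sobjs G H) (ideal_of e)"
  shows "extend b c * pick_unit = (\<Sum>Y\<in>component_objs G H. b Y) + c"
proof -
  have bS: "b Y \<in> ideal_of e (pick Y)" if "Y \<in> component_objs G H" for Y
    using b[OF that] unfolding invariants_def by blast
  have "extend b c * e (pick Y) = b Y" if Y: "Y \<in> component_objs G H" for Y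
  proof -
    let ?p = "pick Y"
    have p: "?p \<in> sobjs G H" "?p \<in> objs G" "orbit ?p = Y"
      using pick_in_sobjs Y sobjs_subset_objs orbit_pick by auto
    note u = path_to[OF p(1)]
    have "path_to ?p \<in> homs G H ?p ?p"
      using u p unfolding homs_def by simp
    then have "\<alpha> (path_to ?p) (b Y * e ?p) = b Y * e ?p"
      using invariant_global_transport[OF b[OF Y] _ u(4)] u p by simp
    then show ?thesis
      using extend_mult_e[OF bS c p(2)] p bS[OF Y] mem_ideal_iff by simp
  qed
  moreover have "extend b c * unit_on (objs G - sobjs G H) = c"
  proof -
    have "extend b c * unit_on (objs G - sobjs G H) = c * unit_on (objs G - sobjs G H)"
      unfolding mult_unit_on using extend_mult_e[OF bS c] by (intro sum.cong) auto
    then show ?thesis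
      using mem_dsum_mult_unit_on c by auto
  qed
  ultimately show ?thesis
    unfolding mult_pick_unit by simp
qed

lemma invariants_iso_pick_sum:
  "ring_iso_on (\<lambda>a. a * pick_unit) (invariants G e \<alpha> UNIV H)
     {a + c | a c.
        a \<in> dsum (component_objs G H)
               (\<lambda>Y. invariants G e \<alpha> (ideal_of e (pick Y)) (homs G H (pick Y) (pick Y)))
      \<and> c \<in> dsum (objs G - sobjs G H) (ideal_of e)}"
  (is "ring_iso_on _ ?I ?T")
proof (rule ring_iso_on_mult_central_idem)
  show "a * pick_unit = pick_unit * a" for a
    unfolding pick_unit_def using picks_subset_objs by (rule unit_on_central)
  show "pick_unit * pick_unit = pick_unit"
    unfolding pick_unit_def using picks_subset_objs by (rule unit_on_idem)
  show "inj_on (\<lambda>a. a * pick_unit) ?I"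
    by (rule inj_on_mult_pick_unit)
  show "(\<lambda>a. a * pick_unit) ` ?I = ?T"
  proof (intro equalityI subsetI)
    fix t assume "t \<in> (\<lambda>a. a * pick_unit) ` ?I"
    then obtain a where a: "a \<in> ?I" and t: "t = a * pick_unit"
      by blast
    have "(\<Sum>Y\<in>component_objs G H. a * e (pick Y))
        \<in> dsum (component_objs G H)
             (\<lambda>Y. invariants G e \<alpha> (ideal_of e (pick Y)) (homs G H (pick Y) (pick Y)))"
      using mult_e_pick_invariant[OF a] by (rule mem_dsumI)
    moreover have "a * unit_on (objs G - sobjs G H) \<in> dsum (objs G - sobjs G H) (ideal_of e)"
      by (rule mult_unit_on_mem_dsum) blast
    ultimately show "t \<in> ?T"
      unfolding t mult_pick_unit by blast
  next
    fix t assume "t \<in> ?T"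
    then obtain t' c where t: "t = t' + c" and c: "c \<in> dsum (objs G - sobjs G H) (ideal_of e)"
      and t': "t' \<in> dsum (component_objs G H)
             (\<lambda>Y. invariants G e \<alpha> (ideal_of e (pick Y)) (homs G H (pick Y) (pick Y)))"
      by blast
    from t' obtain b where "t' = (\<Sum>Y\<in>component_objs G H. b Y)"
      and b: "\<And>Y. Y \<in> component_objs G H \<Longrightarrow>
        b Y \<in> invariants G e \<alpha> (ideal_of e (pick Y)) (homs G H (pick Y) (pick Y))"
      by (rule mem_dsumE) blast
    then have "t = extend b c * pick_unit"
      using extend_mult_pick_unit[OF b c] t by simp
    then show "t \<in> (\<lambda>a. a * pick_unit) ` ?I"
      using extend_invariant[OF b c] by blast
  qed
qed

end

theorem corollary3p4:
  fixes G :: "('g, 'b) groupoid_scheme"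
    and e :: "'g \<Rightarrow> 'a::ring"
    and \<alpha> :: "'g \<Rightarrow> 'a \<Rightarrow> 'a"
    and H :: "'g set"
    and pick :: "'g set \<Rightarrow> 'g"
  assumes "is_groupoid G"
    and "finite (mor G)"
    and "connected_groupoid G"
    and "unital_partial_action G e \<alpha>"
    and "group_type_conn G e (mor G) (objs G)"
    and "internal_direct_sum (objs G) (ideal_of e) UNIV"
    and "subgroupoid H G"
    and "group_type_sub G e H"
    and "\<forall>Y\<in>component_objs G H. pick Y \<in> Y"
  shows "invariants G e \<alpha> UNIV H =
           {a + c | a c.
              a \<in> dsum (component_objs G H)
                     (\<lambda>Y. invariants G e \<alpha> (dsum Y (ideal_of e)) (component G H Y))
            \<and> c \<in> dsum (objs G - sobjs G H) (ideal_of e)}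
      \<and> (\<exists>f. ring_iso_on f (invariants G e \<alpha> UNIV H)
           {a + c | a c.
              a \<in> dsum (component_objs G H)
                     (\<lambda>Y. invariants G e \<alpha> (ideal_of e (pick Y)) (homs G H (pick Y) (pick Y)))
            \<and> c \<in> dsum (objs G - sobjs G H) (ideal_of e)})"
proof -
  interpret subgroupoid_action G e \<alpha> H pick
    using assms by unfold_locales (simp_all add: groupoid_def)
  show ?thesis
    using invariants_eq_component_sum invariants_iso_pick_sum by blast
qed

end
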